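(* Let $(X,d)$ be a bounded metric space and $\ell:X\to[0,+\infty)$ a bounded lower semicontinuous function with $\inf_X\ell=0$. For $\lambda\ge0$ let $u_\lambda$ denote the Perron solution of $(\mathcal{G}_\lambda)$. Then: (a) $u_\lambda\to u_0$ uniformly as $\lambda\to0$; (b) if $X$ is compact and $\alpha>0$, then $u_\lambda\to u_\alpha$ uniformly as $\lambda\to\alpha$.
   Context: Global slope: $G[u](x)=\sup_{y\neq x}\frac{(u(x)-u(y))_+}{d(x,y)}$ if $u(x)<+\infty$, $G[u](x)=+\infty$ otherwise. A solution of $(\mathcal{G}_\lambda)$ is a lower semicontinuous $u$ with $\inf_Xu=0$ and $\lambda u+G[u]=\ell$ on $X$; the Perron solution is the solution that is pointwise maximal among all solutions. *)

theory Defs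
  imports "HOL-Analysis.Analysis"
begin

definition lsc :: "('a::topological_space \<Rightarrow> real) \<Rightarrow> bool" where
  "lsc f \<longleftrightarrow> (\<forall>x t. t < f x \<longrightarrow> (\<forall>\<^sub>F y in nhds x. t < f y))"

text \<open>Global slope G[u](x) = sup over y \<noteq> x of (u x - u y)_+ / d(x,y), valued in [0,+\<infinity>].
  (Solutions are necessarily finite-valued since \<ell> is finite, so u is real-valued here.)\<close>
definition global_slope :: "('a::metric_space \<Rightarrow> real) \<Rightarrow> 'a \<Rightarrow> ereal" where
  "global_slope u x = (SUP y\<in>{y. y \<noteq> x}. ereal (max (u x - u y) 0 / dist x y))"

definition is_solution :: "real \<Rightarrow> ('a::metric_space \<Rightarrow> real) \<Rightarrow> ('a \<Rightarrow> real) \<Rightarrow> bool" where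
  "is_solution lam ell u \<longleftrightarrow> lsc u \<and> (INF x. u x) = 0 \<and> bdd_below (range u) \<and>
     (\<forall>x. ereal (lam * u x) + global_slope u x = ereal (ell x))"

definition is_perron :: "real \<Rightarrow> ('a::metric_space \<Rightarrow> real) \<Rightarrow> ('a \<Rightarrow> real) \<Rightarrow> bool" where
  "is_perron lam ell u \<longleftrightarrow> is_solution lam ell u \<and>
     (\<forall>v. is_solution lam ell v \<longrightarrow> (\<forall>x. v x \<le> u x))"

definition perron :: "real \<Rightarrow> ('a::metric_space \<Rightarrow> real) \<Rightarrow> ('a \<Rightarrow> real)" where
  "perron lam ell = (THE u. is_perron lam ell u)"

end

theory Submission
  imports Defs
begin

text \<open>
  The Perron solution is the supremum of all subsolutions, here described by pointwise
  inequalities. Subsolutions are bounded by diam X times ell and are Lipschitz with constant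
  sup ell, and their supremum U is again a subsolution. If the slope of U at some point x were
  strictly below ell x - lambda U x, then by lower semicontinuity of ell the maximum of U and a
  small cone erected above U x would still be a subsolution, contradicting the maximality of U.
  Hence U solves (G_lambda), and since every solution is a subsolution, U is the Perron solution.
  Dividing a lambda-subsolution by 1 + |mu - lambda| diam X gives a mu-subsolution, so the Perron
  solutions are Lipschitz in lambda, uniformly on X.
\<close>

text \<open>The pointwise, division-free form of lambda v + G[v] \<le> ell, together with inf v = 0.\<close>

definition is_subsolution :: "real \<Rightarrow> ('a::metric_space \<Rightarrow> real) \<Rightarrow> ('a \<Rightarrow> real) \<Rightarrow> bool" where
  "is_subsolution lam ell v \<longleftrightarrow>
     (\<forall>x. 0 \<le> v x) \<and> (\<forall>e>0. \<exists>x. v x < e) \<and> (\<forall>x. lam * v x \<le> ell x) \<and>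
     (\<forall>x y. v x - v y \<le> (ell x - lam * v x) * dist x y)"

definition perron_sup :: "real \<Rightarrow> ('a::metric_space \<Rightarrow> real) \<Rightarrow> 'a \<Rightarrow> real" where
  "perron_sup lam ell x = (SUP v\<in>{v. is_subsolution lam ell v}. v x)"

lemma is_subsolutionI:
  assumes "\<And>x. 0 \<le> v x" and "\<And>e. 0 < e \<Longrightarrow> \<exists>x. v x < e" and "\<And>x. lam * v x \<le> ell x"
    and "\<And>x y. v x - v y \<le> (ell x - lam * v x) * dist x y"
  shows "is_subsolution lam ell v"
  using assms unfolding is_subsolution_def by blast

lemma
  assumes "is_subsolution lam ell v"
  shows subsolution_nonneg: "0 \<le> v x"
    and subsolution_small: "0 < e \<Longrightarrow> \<exists>x. v x < e"
    and subsolution_below_ell: "lam * v x \<le> ell x"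
    and subsolution_slope: "v x - v y \<le> (ell x - lam * v x) * dist x y"
  using assms unfolding is_subsolution_def by blast+

lemma INF_eq_0_iff_small:
  fixes f :: "'a \<Rightarrow> real"
  assumes "\<And>x. 0 \<le> f x"
  shows "(INF x. f x) = 0 \<longleftrightarrow> (\<forall>e>0. \<exists>x. f x < e)"
proof -
  have bdd: "bdd_below (range f)"
    using assms by (intro bdd_belowI[where m = 0]) auto
  have "(INF x. f x) = 0" if small: "\<forall>e>0. \<exists>x. f x < e"
  proof (rule antisym)
    show "0 \<le> (INF x. f x)"
      using assms by (intro cINF_greatest) auto
    show "(INF x. f x) \<le> 0"
    proof (rule ccontr)
      assume "\<not> (INF x. f x) \<le> 0"
      then obtain x where "f x < (INF x. f x)"
        using small by force
      then show False
        using cINF_lower[OF bdd, of x] by simp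
    qed
  qed
  then show ?thesis
    using cINF_less_iff[OF _ bdd] by auto
qed

lemma lsc_if_lipschitz_below:
  fixes f :: "'a::metric_space \<Rightarrow> real"
  assumes "\<And>x y. f x - f y \<le> L * dist x y"
  shows "lsc f"
  unfolding lsc_def
proof (intro allI impI)
  fix x t assume t: "t < f x"
  define r where "r = (f x - t) / (\<bar>L\<bar> + 1)"
  have r: "0 < r" "(\<bar>L\<bar> + 1) * r = f x - t"
    using t by (simp_all add: r_def add_pos_nonneg)
  have "t < f y" if "dist y x < r" for y
  proof -
    have "f x - f y \<le> \<bar>L\<bar> * dist y x"
      using assms[of x y] by (smt (verit) dist_commute mult_right_mono zero_le_dist abs_ge_self)
    also have "\<dots> \<le> \<bar>L\<bar> * r"
      using that by (intro mult_left_mono) auto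
    finally show ?thesis
      using r by (simp add: algebra_simps)
  qed
  then show "\<forall>\<^sub>F y in nhds x. t < f y"
    unfolding eventually_nhds_metric using r(1) by blast
qed

lemma global_slope_le_ereal_iff:
  fixes u :: "'a::metric_space \<Rightarrow> real"
  assumes "y0 \<noteq> x"
  shows "global_slope u x \<le> ereal s \<longleftrightarrow> 0 \<le> s \<and> (\<forall>y. u x - u y \<le> s * dist x y)"
proof -
  have quotient_le_iff: "max (u x - u y) 0 / dist x y \<le> s \<longleftrightarrow> 0 \<le> s \<and> u x - u y \<le> s * dist x y"
    if "y \<noteq> x" for y
    using that by (auto simp: divide_le_eq mult.commute zero_le_mult_iff)
  have "global_slope u x \<le> ereal s \<longleftrightarrow> (\<forall>y. y \<noteq> x \<longrightarrow> 0 \<le> s \<and> u x - u y \<le> s * dist x y)"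
    unfolding global_slope_def SUP_le_iff using quotient_le_iff by auto
  then show ?thesis
    using assms by (metis diff_self dist_self mult_zero_right order_refl)
qed

lemma solution_imp_nontrivial:
  fixes u :: "'a::metric_space \<Rightarrow> real" and x :: 'a
  assumes "is_solution lam ell u"
  shows "\<exists>y. y \<noteq> x"
proof (rule ccontr)
  assume "\<nexists>y. y \<noteq> x"
  then have "global_slope u x = -\<infinity>"
    unfolding global_slope_def by (simp add: bot_ereal_def)
  moreover have "ereal (lam * u x) + global_slope u x = ereal (ell x)"
    using assms unfolding is_solution_def by blast
  ultimately show False
    by simp
qed

lemma uniform_limit_if_lipschitz_in_parameter:
  fixes f :: "'p::metric_space \<Rightarrow> 'a \<Rightarrow> 'b::metric_space"
  assumes lip: "\<And>l x. l \<in> T \<Longrightarrow> dist (f l x) (f a x) \<le> C * dist l a"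
    and near: "\<forall>\<^sub>F l in at a within S. l \<in> T"
  shows "uniform_limit X f (f a) (at a within S)"
  unfolding uniform_limit_iff
proof (intro allI impI)
  fix e :: real assume e: "0 < e"
  have "\<forall>\<^sub>F l in at a within S. dist l a < e / (\<bar>C\<bar> + 1)"
    using e by (intro tendstoD[OF tendsto_ident_at]) (simp add: add_pos_nonneg)
  with near show "\<forall>\<^sub>F l in at a within S. \<forall>x\<in>X. dist (f l x) (f a x) < e"
  proof eventually_elim
    case (elim l)
    have "C * dist l a \<le> (\<bar>C\<bar> + 1) * dist l a"
      by (intro mult_right_mono) auto
    also have "\<dots> < e"
      using elim(2) by (simp add: less_divide_eq add_pos_nonneg mult.commute)
    finally show ?case
      using lip[OF elim(1)] by (auto intro: le_less_trans)
  qed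
qed

locale slope_problem =
  fixes ell :: "'a::metric_space \<Rightarrow> real" and D L :: real
  assumes diam_le: "dist x y \<le> D"
    and ell_nonneg: "0 \<le> ell x" and ell_le: "ell x \<le> L"
    and lsc_ell: "lsc ell"
    and ell_small: "0 < e \<Longrightarrow> \<exists>x. ell x < e"
    and nontrivial: "\<exists>y. y \<noteq> x"
begin

lemma D_pos: "0 < D"
proof -
  obtain x y :: 'a where "y \<noteq> x"
    using nontrivial by blast
  then show ?thesis
    using diam_le[of x y] by (smt (verit) zero_less_dist_iff)
qed

lemma subsolution_le_diam:
  assumes lam: "0 \<le> lam" and v: "is_subsolution lam ell v"
  shows "v x \<le> D * ell x"
proof (rule field_le_epsilon)
  fix e :: real assume "0 < e"
  then obtain y where y: "v y < e"
    using subsolution_small[OF v] by blast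
  have "v x - v y \<le> (ell x - lam * v x) * dist x y"
    using subsolution_slope[OF v] .
  also have "\<dots> \<le> ell x * dist x y"
    using subsolution_nonneg[OF v, of x] lam by (intro mult_right_mono) auto
  also have "\<dots> \<le> ell x * D"
    by (intro mult_left_mono diam_le ell_nonneg)
  finally show "v x \<le> D * ell x + e"
    using y by (simp add: algebra_simps)
qed

lemma subsolution_lipschitz:
  assumes lam: "0 \<le> lam" and v: "is_subsolution lam ell v"
  shows "v x - v y \<le> L * dist x y"
proof -
  have "v x - v y \<le> (ell x - lam * v x) * dist x y"
    using subsolution_slope[OF v] .
  also have "\<dots> \<le> L * dist x y"
  proof (rule mult_right_mono)
    show "ell x - lam * v x \<le> L"
      using subsolution_nonneg[OF v, of x] lam ell_le[of x] by (smt (verit) mult_nonneg_nonneg)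
  qed simp
  finally show ?thesis .
qed

lemma subsolution_zero: "is_subsolution lam ell (\<lambda>_. 0)"
  by (rule is_subsolutionI) (auto simp: ell_nonneg)

lemma perron_sup_upper:
  assumes "0 \<le> lam" and "is_subsolution lam ell v"
  shows "v x \<le> perron_sup lam ell x"
  unfolding perron_sup_def
proof (rule cSUP_upper)
  show "bdd_above ((\<lambda>v. v x) ` {v. is_subsolution lam ell v})"
    using subsolution_le_diam[OF assms(1)] by (auto intro!: bdd_aboveI[where M = "D * ell x"])
qed (use assms(2) in simp)

lemma perron_sup_least:
  assumes "\<And>v. is_subsolution lam ell v \<Longrightarrow> v x \<le> M"
  shows "perron_sup lam ell x \<le> M"
  unfolding perron_sup_def using subsolution_zero assms by (intro cSUP_least) auto

lemma perron_sup_nonneg: "0 \<le> lam \<Longrightarrow> 0 \<le> perron_sup lam ell x"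
  using perron_sup_upper[OF _ subsolution_zero] by simp

lemma perron_sup_le_diam: "0 \<le> lam \<Longrightarrow> perron_sup lam ell x \<le> D * ell x"
  by (intro perron_sup_least subsolution_le_diam)

lemma subsolution_perron_sup:
  assumes lam: "0 \<le> lam"
  shows "is_subsolution lam ell (perron_sup lam ell)"
proof (rule is_subsolutionI)
  let ?U = "perron_sup lam ell"
  show "0 \<le> ?U x" for x
    using perron_sup_nonneg[OF lam] .
  show "\<exists>x. ?U x < e" if e: "0 < e" for e
  proof -
    obtain x where "ell x < e / D"
      using ell_small[of "e / D"] e D_pos by auto
    then have "D * ell x < e"
      using D_pos by (simp add: less_divide_eq mult.commute)
    then show ?thesis
      using perron_sup_le_diam[OF lam] by (meson le_less_trans)
  qed
  show "lam * ?U x \<le> ell x" for x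
  proof (cases "lam = 0")
    case True
    then show ?thesis using ell_nonneg by simp
  next
    case False
    then have "?U x \<le> ell x / lam"
      using lam subsolution_below_ell
      by (intro perron_sup_least) (auto simp: le_divide_eq mult.commute)
    then show ?thesis
      using False lam by (simp add: le_divide_eq mult.commute)
  qed
  show "?U x - ?U y \<le> (ell x - lam * ?U x) * dist x y" for x y
  proof -
    have k: "0 < 1 + lam * dist x y"
      using lam by (simp add: add_pos_nonneg)
    have "v x \<le> (ell x * dist x y + ?U y) / (1 + lam * dist x y)"
      if v: "is_subsolution lam ell v" for v
      using subsolution_slope[OF v, of x y] perron_sup_upper[OF lam v, of y] k
      by (simp add: le_divide_eq algebra_simps)
    then have "?U x \<le> (ell x * dist x y + ?U y) / (1 + lam * dist x y)"
      by (rule perron_sup_least)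
    then show ?thesis
      using k by (simp add: le_divide_eq algebra_simps)
  qed
qed

text \<open>The gap g keeps c inactive where ell is close to its infimum, so the maximum still has
  infimum 0.\<close>

lemma subsolution_max:
  assumes lam: "0 \<le> lam" and u: "is_subsolution lam ell u" and gap: "0 < g"
    and c_gap: "\<And>z. u z < c z \<Longrightarrow> lam * c z + g \<le> ell z"
    and c_slope: "\<And>z y. u z < c z \<Longrightarrow> c z - c y \<le> (ell z - lam * c z) * dist z y"
  shows "is_subsolution lam ell (\<lambda>z. max (u z) (c z))"
proof (rule is_subsolutionI)
  show "0 \<le> max (u z) (c z)" for z
    using subsolution_nonneg[OF u, of z] by (simp add: le_max_iff_disj)
  show "lam * max (u z) (c z) \<le> ell z" for z
    using c_gap[of z] subsolution_below_ell[OF u, of z] gap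
    by (cases "u z < c z") (auto simp: max_def)
  show "max (u z) (c z) - max (u y) (c y) \<le> (ell z - lam * max (u z) (c z)) * dist z y" for z y
  proof (cases "u z < c z")
    case True
    then show ?thesis
      using c_slope[OF True, of y] by (auto simp: max_def)
  next
    case False
    then show ?thesis
      using subsolution_slope[OF u, of z y] by (simp add: max_def)
  qed
  show "\<exists>z. max (u z) (c z) < e" if e: "0 < e" for e
  proof -
    obtain z where z: "ell z < min g (e / D)"
      using ell_small[of "min g (e / D)"] e gap D_pos by auto
    have "\<not> u z < c z"
    proof
      assume active: "u z < c z"
      then have "0 \<le> lam * c z"
        using lam subsolution_nonneg[OF u, of z] by simp
      then show False
        using c_gap[OF active] z by simp
    qed
    moreover have "u z < e"
      using subsolution_le_diam[OF lam u, of z] z D_pos by (simp add: less_divide_eq mult.commute)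
    ultimately show ?thesis
      by (intro exI[of _ z]) simp
  qed
qed

lemma subsolution_max_cone:
  assumes lam: "0 \<le> lam" and u: "is_subsolution lam ell u"
    and u_slope_at: "\<And>z. u x - u z \<le> s * dist x z"
    and s: "0 \<le> s" "s < K" and delta: "\<delta> \<le> \<rho> * (K - s)"
    and ell_ball: "\<And>z. dist x z < \<rho> \<Longrightarrow> lam * (u x + \<delta>) + K \<le> ell z"
  shows "is_subsolution lam ell (\<lambda>z. max (u z) (u x + \<delta> - K * dist x z))"
proof -
  define c where "c z = u x + \<delta> - K * dist x z" for z
  have c_gap: "lam * c z + K \<le> ell z" if active: "u z < c z" for z
  proof -
    have "(K - s) * dist x z < \<rho> * (K - s)"
      using active u_slope_at[of z] delta by (simp add: c_def algebra_simps)
    then have "dist x z < \<rho>"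
      using s by (simp add: mult.commute)
    moreover have "lam * c z \<le> lam * (u x + \<delta>)"
      using lam s by (intro mult_left_mono) (auto simp: c_def)
    ultimately show ?thesis
      using ell_ball by fastforce
  qed
  have "is_subsolution lam ell (\<lambda>z. max (u z) (c z))"
  proof (rule subsolution_max[OF lam u _ c_gap])
    show "0 < K"
      using s by simp
    show "c z - c y \<le> (ell z - lam * c z) * dist z y" if "u z < c z" for z y
    proof -
      have "dist x y - dist x z \<le> dist z y"
        using dist_triangle[of x y z] by simp
      then have "K * (dist x y - dist x z) \<le> K * dist z y"
        using s by (intro mult_left_mono) auto
      then have "c z - c y \<le> K * dist z y"
        by (simp add: c_def right_diff_distrib)
      also have "\<dots> \<le> (ell z - lam * c z) * dist z y"
        using c_gap[OF that] by (intro mult_right_mono) auto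
      finally show ?thesis .
    qed
  qed
  then show ?thesis
    by (simp only: c_def)
qed

lemma perron_sup_steep:
  assumes lam: "0 \<le> lam" and s: "0 \<le> s"
    and slope_at: "\<And>z. perron_sup lam ell x - perron_sup lam ell z \<le> s * dist x z"
  shows "ell x - lam * perron_sup lam ell x \<le> s"
proof (rule ccontr)
  let ?U = "perron_sup lam ell"
  assume "\<not> ?thesis"
  then obtain \<eta> where \<eta>: "0 < \<eta>" and \<eta>_eq: "ell x - lam * ?U x - s = 4 * \<eta>"
    by (intro that[of "(ell x - lam * ?U x - s) / 4"]) auto
  define K where "K = s + 2 * \<eta>"
  have "\<forall>\<^sub>F z in nhds x. ell x - \<eta> < ell z"
    using lsc_ell \<eta> unfolding lsc_def by simp
  then obtain \<rho> where \<rho>: "0 < \<rho>" and ball: "\<And>z. dist x z < \<rho> \<Longrightarrow> ell x - \<eta> < ell z"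
    unfolding eventually_nhds_metric by (metis dist_commute)
  define \<delta> where "\<delta> = min (\<rho> * (K - s)) (\<eta> / (lam + 1))"
  have \<delta>: "0 < \<delta>" "lam * \<delta> \<le> \<eta>"
  proof -
    show "0 < \<delta>"
      using \<rho> \<eta> lam by (simp add: \<delta>_def K_def)
    have "\<delta> \<le> \<eta> / (lam + 1)"
      by (simp add: \<delta>_def)
    then have "(lam + 1) * \<delta> \<le> \<eta>"
      using lam by (simp add: le_divide_eq mult.commute)
    then show "lam * \<delta> \<le> \<eta>"
      using \<open>0 < \<delta>\<close> by (simp add: algebra_simps)
  qed
  have "is_subsolution lam ell (\<lambda>z. max (?U z) (?U x + \<delta> - K * dist x z))"
  proof (rule subsolution_max_cone[OF lam subsolution_perron_sup[OF lam] slope_at s])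
    show "s < K" and "\<delta> \<le> \<rho> * (K - s)"
      using \<eta> by (simp_all add: K_def \<delta>_def)
    show "lam * (?U x + \<delta>) + K \<le> ell z" if "dist x z < \<rho>" for z
      using ball[OF that] \<delta>(2) \<eta>_eq unfolding K_def distrib_left by linarith
  qed
  then have "?U x + \<delta> \<le> ?U x"
    using perron_sup_upper[OF lam, of _ x] by fastforce
  then show False
    using \<delta>(1) by simp
qed

lemma global_slope_perron_sup:
  assumes lam: "0 \<le> lam"
  shows "global_slope (perron_sup lam ell) x = ereal (ell x - lam * perron_sup lam ell x)"
proof -
  let ?U = "perron_sup lam ell"
  obtain y0 where y0: "y0 \<noteq> x"
    using nontrivial by blast
  note slope_le_iff = global_slope_le_ereal_iff[OF y0, of ?U]
  have U: "is_subsolution lam ell ?U"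
    using subsolution_perron_sup[OF lam] .
  have "global_slope ?U x \<le> ereal (ell x - lam * ?U x)"
    using subsolution_below_ell[OF U, of x] subsolution_slope[OF U] by (simp add: slope_le_iff)
  moreover have "\<not> global_slope ?U x < ereal (ell x - lam * ?U x)"
  proof
    assume "global_slope ?U x < ereal (ell x - lam * ?U x)"
    then obtain s where s: "global_slope ?U x < ereal s" "ereal s < ereal (ell x - lam * ?U x)"
      using ereal_dense2 by blast
    have "0 \<le> s" "\<And>z. ?U x - ?U z \<le> s * dist x z"
      using less_imp_le[OF s(1)] slope_le_iff by auto
    then have "ell x - lam * ?U x \<le> s"
      by (rule perron_sup_steep[OF lam])
    then show False
      using s(2) by simp
  qed
  ultimately show ?thesis
    by simp
qed

lemma solution_perron_sup:
  assumes lam: "0 \<le> lam"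
  shows "is_solution lam ell (perron_sup lam ell)"
proof -
  let ?U = "perron_sup lam ell"
  have U: "is_subsolution lam ell ?U"
    using subsolution_perron_sup[OF lam] .
  have nonneg: "0 \<le> ?U x" for x
    using subsolution_nonneg[OF U] .
  have "lsc ?U"
    using subsolution_lipschitz[OF lam U] by (rule lsc_if_lipschitz_below)
  moreover have "(INF x. ?U x) = 0"
    using subsolution_small[OF U] INF_eq_0_iff_small[of ?U, OF nonneg] by blast
  moreover have "bdd_below (range ?U)"
    using nonneg by (intro bdd_belowI[where m = 0]) auto
  ultimately show ?thesis
    unfolding is_solution_def by (simp add: global_slope_perron_sup[OF lam])
qed

lemma solution_imp_subsolution:
  assumes u: "is_solution lam ell u"
  shows "is_subsolution lam ell u"
proof -
  have bdd: "bdd_below (range u)" and inf: "(INF x. u x) = 0"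
    and eq: "\<And>x. ereal (lam * u x) + global_slope u x = ereal (ell x)"
    using u unfolding is_solution_def by auto
  have nonneg: "0 \<le> u x" for x
    using cINF_lower[OF bdd, of x] inf by simp
  have slope_bound: "0 \<le> ell x - lam * u x \<and> (\<forall>y. u x - u y \<le> (ell x - lam * u x) * dist x y)"
    for x
  proof -
    obtain y0 where y0: "y0 \<noteq> x"
      using nontrivial by blast
    have "global_slope u x = ereal (ell x - lam * u x)"
      using eq[of x] by (cases "global_slope u x") auto
    then show ?thesis
      using global_slope_le_ereal_iff[OF y0, of u "ell x - lam * u x"] by simp
  qed
  show ?thesis
  proof (rule is_subsolutionI)
    show "\<exists>x. u x < e" if "0 < e" for e
      using INF_eq_0_iff_small[of u, OF nonneg] inf that by blast
  qed (use nonneg slope_bound in auto)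
qed

lemma perron_eq_perron_sup:
  assumes lam: "0 \<le> lam"
  shows "perron lam ell = perron_sup lam ell"
  unfolding perron_def
proof (rule the_equality)
  show "is_perron lam ell (perron_sup lam ell)"
    unfolding is_perron_def
    using solution_perron_sup[OF lam] perron_sup_upper[OF lam] solution_imp_subsolution by blast
  show "u = perron_sup lam ell" if "is_perron lam ell u" for u
  proof
    fix x
    show "u x = perron_sup lam ell x"
      using that solution_perron_sup[OF lam] perron_sup_upper[OF lam] solution_imp_subsolution
      unfolding is_perron_def by (meson antisym)
  qed
qed

lemma subsolution_divide:
  assumes lam: "0 \<le> lam" and v: "is_subsolution lam ell v" and mu: "0 \<le> mu"
  shows "is_subsolution mu ell (\<lambda>z. v z / (1 + \<bar>mu - lam\<bar> * D))"
proof -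
  define k where "k = 1 + \<bar>mu - lam\<bar> * D"
  have k: "1 \<le> k"
    using D_pos by (simp add: k_def)
  have shift: "ell z - lam * v z \<le> k * ell z - mu * v z" for z
  proof -
    have "(mu - lam) * v z \<le> \<bar>mu - lam\<bar> * v z"
      using subsolution_nonneg[OF v] by (intro mult_right_mono) auto
    also have "\<dots> \<le> \<bar>mu - lam\<bar> * (D * ell z)"
      using subsolution_le_diam[OF lam v] by (intro mult_left_mono) auto
    finally show ?thesis
      by (simp add: k_def algebra_simps)
  qed
  have "is_subsolution mu ell (\<lambda>z. v z / k)"
  proof (rule is_subsolutionI)
    show "0 \<le> v z / k" for z
      using subsolution_nonneg[OF v] k by simp
    show "\<exists>z. v z / k < e" if "0 < e" for e
      using subsolution_small[OF v, of "e * k"] that k by (auto simp: divide_less_eq)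
    show "mu * (v z / k) \<le> ell z" for z
      using shift[of z] subsolution_below_ell[OF v, of z] k by (simp add: divide_le_eq mult.commute)
    show "v z / k - v y / k \<le> (ell z - mu * (v z / k)) * dist z y" for z y
    proof -
      have "v z - v y \<le> (k * ell z - mu * v z) * dist z y"
        using subsolution_slope[OF v, of z y] shift[of z] by (meson mult_right_mono order_trans zero_le_dist)
      then have "(v z - v y) / k \<le> (k * ell z - mu * v z) * dist z y / k"
        using k by (intro divide_right_mono) auto
      also have "\<dots> = (ell z - mu * (v z / k)) * dist z y"
        using k by (simp add: field_simps)
      finally show ?thesis
        by (simp add: diff_divide_distrib)
    qed
  qed
  then show ?thesis
    by (simp only: k_def)
qed

lemma perron_sup_diff_le:
  assumes lam: "0 \<le> lam" and mu: "0 \<le> mu"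
  shows "perron_sup lam ell x - perron_sup mu ell x \<le> D * D * L * \<bar>lam - mu\<bar>"
proof -
  let ?U = "perron_sup lam ell"
  define t where "t = \<bar>mu - lam\<bar> * D"
  have t: "0 \<le> t"
    using D_pos by (simp add: t_def)
  have U_nonneg: "0 \<le> ?U x"
    using perron_sup_nonneg[OF lam] .
  have "?U x / (1 + t) \<le> perron_sup mu ell x"
    unfolding t_def
    by (rule perron_sup_upper[OF mu subsolution_divide[OF lam subsolution_perron_sup[OF lam] mu]])
  then have "?U x - perron_sup mu ell x \<le> ?U x - ?U x / (1 + t)"
    by simp
  also have "\<dots> = ?U x * t / (1 + t)"
    using t by (simp add: field_simps)
  also have "\<dots> \<le> ?U x * t"
  proof -
    have "?U x * t * 1 \<le> ?U x * t * (1 + t)"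
      using U_nonneg t by (intro mult_left_mono) auto
    then show ?thesis
      using t by (simp add: divide_le_eq)
  qed
  also have "\<dots> \<le> (D * L) * t"
  proof (rule mult_right_mono[OF _ t])
    show "?U x \<le> D * L"
      using perron_sup_le_diam[OF lam, of x] ell_le[of x] D_pos
      by (meson mult_left_mono less_imp_le order_trans)
  qed
  finally show ?thesis
    by (simp add: t_def abs_minus_commute algebra_simps)
qed

lemma perron_sup_dist_le:
  assumes "0 \<le> lam" and "0 \<le> mu"
  shows "dist (perron_sup lam ell x) (perron_sup mu ell x) \<le> D * D * L * dist lam mu"
  using perron_sup_diff_le[OF assms] perron_sup_diff_le[OF assms(2,1)]
  by (simp add: dist_real_def abs_minus_commute abs_le_iff)

end

lemma perron_lipschitz_in_parameter:
  fixes ell :: "'a::metric_space \<Rightarrow> real"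
  assumes "bounded (UNIV :: 'a set)"
    and "\<forall>x. ell x \<ge> 0"
    and "bounded (range ell)"
    and "lsc ell"
    and "(INF x. ell x) = 0"
  shows "\<exists>C. \<forall>lam mu x. 0 \<le> lam \<longrightarrow> 0 \<le> mu \<longrightarrow>
           dist (perron lam ell x) (perron mu ell x) \<le> C * dist lam mu"
proof (cases "\<forall>x::'a. \<exists>y. y \<noteq> x")
  case False
  \<comment> \<open>No solutions exist, so perron lam ell is the same junk value THE for every lam.\<close>
  then have "\<not> is_solution lam ell u" for lam u
    using solution_imp_nontrivial by blast
  then have "perron lam ell = perron 0 ell" for lam
    unfolding perron_def is_perron_def by simp
  then show ?thesis
    by (intro exI[of _ 0] allI impI) (metis dist_self mult_zero_left order_refl)
next
  case True
  obtain D where D: "\<And>x y::'a. dist x y \<le> D"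
    using assms(1) unfolding bounded_two_points by blast
  obtain L where L: "\<And>x. ell x \<le> L"
    using assms(3) unfolding bounded_real by (meson abs_le_D1 rangeI)
  have small: "\<exists>x. ell x < e" if "0 < e" for e
    using INF_eq_0_iff_small[of ell] assms(2,5) that by blast
  interpret slope_problem ell D L
    using D assms(2) L assms(4) small True by unfold_locales auto
  show ?thesis
    using perron_sup_dist_le perron_eq_perron_sup by (intro exI[of _ "D * D * L"]) simp
qed

theorem corollary5p6:
  fixes ell :: "'a::metric_space \<Rightarrow> real"
  assumes "bounded (UNIV :: 'a set)"
    and "\<forall>x. ell x \<ge> 0"
    and "bounded (range ell)"
    and "lsc ell"
    and "(INF x. ell x) = 0"
  shows "uniform_limit UNIV (\<lambda>lam. perron lam ell) (perron 0 ell) (at 0 within {0..}) \<and>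
    (\<forall>\<alpha>. compact (UNIV :: 'a set) \<and> \<alpha> > 0 \<longrightarrow>
           uniform_limit UNIV (\<lambda>lam. perron lam ell) (perron \<alpha> ell) (at \<alpha>))"
proof -
  obtain C where C: "\<And>lam mu x. 0 \<le> lam \<Longrightarrow> 0 \<le> mu \<Longrightarrow>
      dist (perron lam ell x) (perron mu ell x) \<le> C * dist lam mu"
    using perron_lipschitz_in_parameter[OF assms] by blast
  have limit: "uniform_limit UNIV (\<lambda>lam. perron lam ell) (perron a ell) (at a within S)"
    if "0 \<le> a" and "\<forall>\<^sub>F lam in at a within S. lam \<in> {0..}" for a S
    using that C by (intro uniform_limit_if_lipschitz_in_parameter[where T = "{0..}"]) auto
  have "\<forall>\<^sub>F lam in at 0 within {0..}. lam \<in> {0..}"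
    by (simp add: eventually_at_filter)
  moreover have "\<forall>\<^sub>F lam in at \<alpha>. lam \<in> {0..}" if "0 < \<alpha>" for \<alpha> :: real
    using order_tendstoD(1)[OF tendsto_ident_at[where s = UNIV] that] by (auto elim: eventually_mono)
  ultimately show ?thesis
    using limit by auto
qed

end
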